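(* Let $q\in\mathbb{C}^\times$ be not a root of unity and $Q\in\mathbb{C}^\times$. (i) For $\varphi,\varphi'\in\mathbb{C}[x]\setminus\{0\}$ with $\deg\varphi\ge\deg\varphi'$, one has $\mathbf{u}^{\langle Q\rangle}(\varphi)=\mathbf{u}^{\langle Q\rangle}(\varphi')$ if and only if $$\varphi=q^{-(\deg\varphi-\deg\varphi')}\,\varphi'\prod_{z=1}^{\deg\varphi-\deg\varphi'}\big(x-q^{-2(z-1)}\beta_\varphi^{-2}Q^{-1}\big).$$ (ii) The restriction of $\mathbf{u}^{\langle Q\rangle}$ to $\mathbb{C}[x]^{\langle Q\rangle}$ is injective, and for every nonzero $\varphi\in\mathbb{C}[x]$ there exists a unique $\varphi'\in\mathbb{C}[x]^{\langle Q\rangle}$ with $\mathbf{u}^{\langle Q\rangle}(\varphi)=\mathbf{u}^{\langle Q\rangle}(\varphi')$.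
   Context: For $t,k>0$, $p_t(q)(x_1,\dots,x_k)=\sum_{\lambda\vdash t,\ \ell(\lambda)\le k}q^{-\ell(\lambda)}(q-q^{-1})^{\ell(\lambda)-1}m_\lambda(x_1,\dots,x_k)$, where $m_\lambda$ is the monomial symmetric polynomial and $\ell(\lambda)$ the number of nonzero parts. For $\beta\in\mathbb{C}^\times$ put $\tilde\beta=(q-q^{-1})^{-1}(1-\beta^{-2})$ and $p^{\langle Q\rangle}_t(q;\beta)(x_1,\dots,x_k)=p_t(q)(x_1,\dots,x_k)+\tilde\beta Q^{-t}+(q-q^{-1})\sum_{z=1}^{t-1}\tilde\beta Q^{-t+z}p_z(q)(x_1,\dots,x_k)$. For nonzero $\varphi=\beta_\varphi(x-\gamma_1)\cdots(x-\gamma_k)\in\mathbb{C}[x]$ ($\beta_\varphi$ the leading coefficient), with $\tilde\beta_\varphi=(q-q^{-1})^{-1}(1-\beta_\varphi^{-2})$, define $\mathbf{u}^{\langle Q\rangle}(\varphi)\in\mathbb{C}^\times\times\prod_{t>0}\mathbb{C}$ to be $(\beta_\varphi,(\tilde\beta_\varphi Q^{-t})_{t>0})$ if $\deg\varphi=0$ and $(\beta_\varphi q^{\deg\varphi},(p^{\langle Q\rangle}_t(q;\beta_\varphi)(\gamma_1,\dots,\gamma_k))_{t>0})$ if $\deg\varphi>0$. Let $\mathbb{C}[x]^{\langle Q\rangle}=\{\varphi\in\mathbb{C}[x]\setminus\{0\}:\beta_\varphi^{-2}Q^{-1}\text{ is not a root of }\varphi\}$. *)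

theory Defs
  imports "HOL-Computational_Algebra.Computational_Algebra" "HOL-Library.Multiset"
begin

(* Partitions of t: multisets of positive naturals summing to t; length = size *)
definition partitions :: "nat \<Rightarrow> nat multiset set" where
  "partitions t = {lam. (\<forall>a\<in>#lam. 0 < a) \<and> sum_mset lam = t}"

(* monomial symmetric polynomial m_lam evaluated at (x_1,...,x_k) = xs:
   sum of x^alpha over all exponent vectors alpha in N^k whose nonzero entries,
   as a multiset, form lam *)
definition monomial_sym :: "nat multiset \<Rightarrow> complex list \<Rightarrow> complex" where
  "monomial_sym lam xs =
     (\<Sum>\<alpha>\<in>{\<alpha> :: nat \<Rightarrow> nat. (\<forall>i. length xs \<le> i \<longrightarrow> \<alpha> i = 0) \<and> (\<forall>i. \<alpha> i \<le> sum_mset lam)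
                  \<and> mset (filter (\<lambda>a. 0 < a) (map \<alpha> [0..<length xs])) = lam}.
        \<Prod>i<length xs. (xs ! i) ^ \<alpha> i)"

definition p_fun :: "complex \<Rightarrow> nat \<Rightarrow> complex list \<Rightarrow> complex" where
  "p_fun q t xs =
     (\<Sum>lam\<in>{lam\<in>partitions t. size lam \<le> length xs}.
        q powi (- int (size lam)) * (q - inverse q) ^ (size lam - 1) * monomial_sym lam xs)"

definition beta_tilde :: "complex \<Rightarrow> complex \<Rightarrow> complex" where
  "beta_tilde q \<beta> = inverse (q - inverse q) * (1 - \<beta> powi (-2))"

definition pQ_fun :: "complex \<Rightarrow> complex \<Rightarrow> complex \<Rightarrow> nat \<Rightarrow> complex list \<Rightarrow> complex" where
  "pQ_fun q Q \<beta> t xs = p_fun q t xs + beta_tilde q \<beta> * Q powi (- int t)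
     + (q - inverse q) * (\<Sum>z=1..t-1. beta_tilde q \<beta> * Q powi (- int t + int z) * p_fun q z xs)"

(* a list of the roots gamma_1,...,gamma_k of phi, with multiplicity (order irrelevant) *)
definition root_list :: "complex poly \<Rightarrow> complex list" where
  "root_list \<phi> = (SOME xs. mset xs = proots \<phi>)"

(* u^<Q>(phi); the sequence component is indexed by t > 0 (value at t = 0 fixed to 0) *)
definition uQ :: "complex \<Rightarrow> complex \<Rightarrow> complex poly \<Rightarrow> complex \<times> (nat \<Rightarrow> complex)" where
  "uQ q Q \<phi> =
     (if degree \<phi> = 0
      then (lead_coeff \<phi>, \<lambda>t. if t = 0 then 0 else beta_tilde q (lead_coeff \<phi>) * Q powi (- int t))
      else (lead_coeff \<phi> * q ^ degree \<phi>,
            \<lambda>t. if t = 0 then 0 else pQ_fun q Q (lead_coeff \<phi>) t (root_list \<phi>)))"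

definition polysQ :: "complex \<Rightarrow> complex poly set" where
  "polysQ Q = {\<phi>. \<phi> \<noteq> 0 \<and> poly \<phi> ((lead_coeff \<phi>) powi (-2) * inverse Q) \<noteq> 0}"

end

theory Submission
  imports Defs
begin

text \<open>
  Write \<beta> for the leading coefficient and \<gamma>_1, ..., \<gamma>_k for the roots of \<phi>. The generating
  series 1 + (q - q^-1) \<Sum>_{t>0} p^<Q>_t(q; \<beta>)(\<gamma>) z^t factors as
    (1 - \<beta>^-2 Q^-1 z) / (1 - Q^-1 z) * \<Prod>_i (1 - q^-2 \<gamma>_i z) / (1 - \<gamma>_i z).
  Hence u(\<phi>) = u(\<phi>') amounts to \<beta> q^(deg \<phi>) = \<beta>' q^(deg \<phi>') together with an identity between
  the multisets of reciprocal zeros and poles. Since q^-2 is not a root of unity, that identity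
  says exactly that the roots of \<phi> are those of \<phi>' plus the string q^(-2(z-1)) \<beta>^-2 Q^-1,
  z = 1, ..., deg \<phi> - deg \<phi>'. For (ii): a nonempty string makes \<beta>^-2 Q^-1 a root of \<phi>, and
  conversely dividing out that root and rescaling by q leaves u unchanged, which gives
  existence by induction on the degree.
\<close>

lemma power_int_minus_nat: "x powi (- int n) = inverse x ^ n" for x :: "'a::field"
  unfolding power_int_minus power_int_of_nat by (rule power_inverse[symmetric])

definition weak_compositions :: "nat \<Rightarrow> nat \<Rightarrow> (nat \<Rightarrow> nat) set" where
  "weak_compositions k t = {\<alpha>. (\<forall>i\<ge>k. \<alpha> i = 0) \<and> (\<Sum>i<k. \<alpha> i) = t}"

section \<open>Weak compositions and coefficients of products of power series\<close>

lemma weak_compositions_0: "weak_compositions 0 t = (if t = 0 then {\<lambda>_. 0} else {})"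
  by (auto simp: weak_compositions_def)

lemma bij_betw_weak_compositions_Suc:
  "bij_betw (\<lambda>\<alpha>. (\<alpha> 0, \<alpha> \<circ> Suc)) (weak_compositions (Suc k) t)
     (SIGMA a:{..t}. weak_compositions k (t - a))"
proof (rule bij_betwI[where g = "\<lambda>(a, \<beta>). case_nat a \<beta>"])
  show "(\<lambda>\<alpha>. (\<alpha> 0, \<alpha> \<circ> Suc)) \<in> weak_compositions (Suc k) t \<rightarrow> (SIGMA a:{..t}. weak_compositions k (t - a))"
    by (auto simp del: sum.lessThan_Suc simp: weak_compositions_def sum.lessThan_Suc_shift)
  show "(\<lambda>(a, \<beta>). case_nat a \<beta>) \<in> (SIGMA a:{..t}. weak_compositions k (t - a)) \<rightarrow> weak_compositions (Suc k) t"
    by (auto simp del: sum.lessThan_Suc simp: weak_compositions_def sum.lessThan_Suc_shift split: nat.splits)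
qed (auto simp: fun_eq_iff split: nat.splits)

lemma finite_weak_compositions: "finite (weak_compositions k t)"
proof (induction k arbitrary: t)
  case (Suc k)
  then have "finite (SIGMA a:{..t}. weak_compositions k (t - a))"
    by auto
  then show ?case
    using bij_betw_weak_compositions_Suc bij_betw_finite by blast
qed (simp add: weak_compositions_0)

lemma sum_weak_compositions_Suc:
  "(\<Sum>\<alpha>\<in>weak_compositions (Suc k) t. F \<alpha>) = (\<Sum>a\<le>t. \<Sum>\<beta>\<in>weak_compositions k (t - a). F (case_nat a \<beta>))"
proof -
  have "case_nat (\<alpha> 0) (\<alpha> \<circ> Suc) = \<alpha>" for \<alpha> :: "nat \<Rightarrow> nat"
    by (auto simp: fun_eq_iff split: nat.splits)
  then have "(\<Sum>\<alpha>\<in>weak_compositions (Suc k) t. F \<alpha>)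
      = (\<Sum>(a, \<beta>)\<in>(SIGMA a:{..t}. weak_compositions k (t - a)). F (case_nat a \<beta>))"
    using sum.reindex_bij_betw[OF bij_betw_weak_compositions_Suc, of "\<lambda>(a, \<beta>). F (case_nat a \<beta>)"]
    by simp
  also have "\<dots> = (\<Sum>a\<le>t. \<Sum>\<beta>\<in>weak_compositions k (t - a). F (case_nat a \<beta>))"
    by (subst sum.Sigma) (auto simp: finite_weak_compositions)
  finally show ?thesis .
qed

lemma prod_list_fps_nth:
  fixes fs :: "'a::comm_ring_1 fps list"
  shows "prod_list fs $ t = (\<Sum>\<alpha>\<in>weak_compositions (length fs) t. \<Prod>i<length fs. fs ! i $ \<alpha> i)"
proof (induction fs arbitrary: t)
  case Nil
  then show ?case
    by (simp add: weak_compositions_0)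
next
  case (Cons f fs)
  have "prod_list (f # fs) $ t = (\<Sum>a\<le>t. f $ a * prod_list fs $ (t - a))"
    by (simp add: fps_mult_nth atLeast0AtMost)
  then show ?case
    by (simp del: prod.lessThan_Suc
        add: Cons sum_weak_compositions_Suc prod.lessThan_Suc_shift sum_distrib_left)
qed

definition nonzero_parts :: "nat \<Rightarrow> (nat \<Rightarrow> nat) \<Rightarrow> nat multiset" where
  "nonzero_parts k \<alpha> = mset (filter (\<lambda>a. 0 < a) (map \<alpha> [0..<k]))"

lemma sum_mset_nonzero_parts: "sum_mset (nonzero_parts k \<alpha>) = (\<Sum>i<k. \<alpha> i)"
proof -
  have "sum_list (filter (\<lambda>a::nat. 0 < a) xs) = sum_list xs" for xs
    by (induction xs) auto
  then have "sum_mset (nonzero_parts k \<alpha>) = sum_list (map \<alpha> [0..<k])"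
    unfolding nonzero_parts_def sum_mset_sum_list by (simp only:)
  also have "\<dots> = (\<Sum>i<k. \<alpha> i)"
    using sum_set_upt_conv_sum_list_nat[of \<alpha> 0 k] by (simp add: atLeast0LessThan)
  finally show ?thesis .
qed

lemma size_nonzero_parts: "size (nonzero_parts k \<alpha>) = card {i. i < k \<and> 0 < \<alpha> i}"
  unfolding nonzero_parts_def size_mset length_filter_conv_card
  by (intro arg_cong[where f = card]) auto

lemma size_nonzero_parts_pos:
  assumes "\<alpha> \<in> weak_compositions k t" and "0 < t"
  shows "0 < size (nonzero_parts k \<alpha>)"
proof (rule ccontr)
  assume "\<not> 0 < size (nonzero_parts k \<alpha>)"
  then have "(\<Sum>i<k. \<alpha> i) = 0"
    using sum_mset_nonzero_parts[of k \<alpha>] by simp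
  with assms show False
    by (simp add: weak_compositions_def)
qed

lemma nonzero_parts_in_partitions:
  assumes "\<alpha> \<in> weak_compositions k t"
  shows "nonzero_parts k \<alpha> \<in> {lam \<in> partitions t. size lam \<le> k}"
proof -
  have "\<forall>a\<in>#nonzero_parts k \<alpha>. 0 < a"
    by (simp add: nonzero_parts_def)
  moreover have "size (nonzero_parts k \<alpha>) \<le> k"
    unfolding nonzero_parts_def size_mset using length_filter_le[of _ "map \<alpha> [0..<k]"] by simp
  moreover have "sum_mset (nonzero_parts k \<alpha>) = t"
    using assms by (simp add: sum_mset_nonzero_parts weak_compositions_def)
  ultimately show ?thesis
    by (simp add: partitions_def)
qed

lemma finite_partitions_size_le: "finite {lam \<in> partitions t. size lam \<le> k}"
proof (rule finite_subset)
  show "{lam \<in> partitions t. size lam \<le> k} \<subseteq> (\<Union>n\<le>k. multisets_of_size {..t} n)"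
    by (auto simp: partitions_def multisets_of_size_def sum_mset.remove)
qed auto

lemma monomial_sym_eq_sum_weak_compositions:
  assumes "lam \<in> partitions t"
  shows "monomial_sym lam xs =
    (\<Sum>\<alpha>\<in>{\<alpha> \<in> weak_compositions (length xs) t. nonzero_parts (length xs) \<alpha> = lam}.
       \<Prod>i<length xs. xs ! i ^ \<alpha> i)"
  unfolding monomial_sym_def
proof (intro sum.cong refl set_eqI iffI)
  fix \<alpha>
  have t: "sum_mset lam = t"
    using assms by (simp add: partitions_def)
  let ?k = "length xs"
  show "\<alpha> \<in> {\<alpha> \<in> weak_compositions ?k t. nonzero_parts ?k \<alpha> = lam}"
    if "\<alpha> \<in> {\<alpha>. (\<forall>i. ?k \<le> i \<longrightarrow> \<alpha> i = 0) \<and> (\<forall>i. \<alpha> i \<le> sum_mset lam)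
               \<and> mset (filter (\<lambda>a. 0 < a) (map \<alpha> [0..<?k])) = lam}"
    using that sum_mset_nonzero_parts[of ?k \<alpha>] t
    by (auto simp: weak_compositions_def nonzero_parts_def)
  show "\<alpha> \<in> {\<alpha>. (\<forall>i. ?k \<le> i \<longrightarrow> \<alpha> i = 0) \<and> (\<forall>i. \<alpha> i \<le> sum_mset lam)
               \<and> mset (filter (\<lambda>a. 0 < a) (map \<alpha> [0..<?k])) = lam}"
    if \<alpha>: "\<alpha> \<in> {\<alpha> \<in> weak_compositions ?k t. nonzero_parts ?k \<alpha> = lam}"
  proof -
    have "\<alpha> i \<le> t" for i
      using \<alpha> member_le_sum[of i "{..<?k}" \<alpha>]
      by (cases "i < ?k") (auto simp: weak_compositions_def)
    with \<alpha> t show ?thesis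
      by (auto simp: weak_compositions_def nonzero_parts_def)
  qed
qed

lemma p_fun_eq_sum_weak_compositions:
  "p_fun q t xs = (\<Sum>\<alpha>\<in>weak_compositions (length xs) t.
     q powi (- int (size (nonzero_parts (length xs) \<alpha>)))
     * (q - inverse q) ^ (size (nonzero_parts (length xs) \<alpha>) - 1)
     * (\<Prod>i<length xs. xs ! i ^ \<alpha> i))"
proof -
  let ?k = "length xs"
  let ?w = "\<lambda>n. q powi (- int n) * (q - inverse q) ^ (n - 1)"
  have "p_fun q t xs = (\<Sum>lam\<in>{lam \<in> partitions t. size lam \<le> ?k}.
      \<Sum>\<alpha>\<in>{\<alpha> \<in> weak_compositions ?k t. nonzero_parts ?k \<alpha> = lam}.
        ?w (size (nonzero_parts ?k \<alpha>)) * (\<Prod>i<?k. xs ! i ^ \<alpha> i))"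
    unfolding p_fun_def
    by (intro sum.cong refl) (simp add: monomial_sym_eq_sum_weak_compositions[of _ t] sum_distrib_left)
  also have "\<dots> = (\<Sum>\<alpha>\<in>weak_compositions ?k t. ?w (size (nonzero_parts ?k \<alpha>)) * (\<Prod>i<?k. xs ! i ^ \<alpha> i))"
    by (rule sum.group)
      (use finite_weak_compositions finite_partitions_size_le nonzero_parts_in_partitions in auto)
  finally show ?thesis .
qed

lemma p_fun_Nil:
  assumes "0 < t"
  shows "p_fun q t [] = 0"
proof -
  have "{#} \<notin> partitions t"
    using assms by (simp add: partitions_def)
  then show ?thesis
    by (simp add: p_fun_def Collect_conv_if)
qed

definition lin_frac_fps :: "'a::comm_ring_1 \<Rightarrow> 'a \<Rightarrow> 'a fps" where
  "lin_frac_fps r x = Abs_fps (\<lambda>n. if n = 0 then 1 else (1 - r) * x ^ n)"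

section \<open>The generating series of p^<Q>_t\<close>

text \<open>The power series of (1 - r x z) / (1 - x z).\<close>

lemma lin_frac_fps_mult:
  "lin_frac_fps r x * (1 - fps_const x * fps_X) = 1 - fps_const (r * x) * fps_X"
proof (rule fps_ext)
  fix n
  have expand: "lin_frac_fps r x * (1 - fps_const x * fps_X)
      = lin_frac_fps r x - fps_const x * (fps_X * lin_frac_fps r x)"
    by (simp add: algebra_simps)
  show "(lin_frac_fps r x * (1 - fps_const x * fps_X)) $ n = (1 - fps_const (r * x) * fps_X) $ n"
  proof (cases n)
    case (Suc m)
    then show ?thesis
      using expand by (cases m) (simp_all add: lin_frac_fps_def fps_X_mult_nth algebra_simps)
  qed (simp add: lin_frac_fps_def)
qed

lemma lin_frac_fps_nth_0 [simp]: "lin_frac_fps r x $ 0 = 1"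
  by (simp add: lin_frac_fps_def)

lemma prod_lin_frac_fps_nth_0 [simp]: "(\<Prod>x\<leftarrow>xs. lin_frac_fps r x) $ 0 = 1"
  by (induction xs) simp_all

lemma prod_lin_frac_fps_nth:
  fixes q :: complex
  assumes "q \<noteq> 0" and "0 < t"
  shows "(\<Prod>x\<leftarrow>xs. lin_frac_fps (inverse q ^ 2) x) $ t = (q - inverse q) * p_fun q t xs"
proof -
  let ?k = "length xs"
  let ?len = "\<lambda>\<alpha>. size (nonzero_parts ?k \<alpha>)"
  let ?c = "1 - inverse q ^ 2"
  have term_eq: "(\<Prod>i<?k. map (lin_frac_fps (inverse q ^ 2)) xs ! i $ \<alpha> i) =
     (q - inverse q) * (q powi (- int (?len \<alpha>)) * (q - inverse q) ^ (?len \<alpha> - 1) * (\<Prod>i<?k. xs ! i ^ \<alpha> i))"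
    if \<alpha>: "\<alpha> \<in> weak_compositions ?k t" for \<alpha>
  proof -
    have "(\<Prod>i<?k. map (lin_frac_fps (inverse q ^ 2)) xs ! i $ \<alpha> i)
        = (\<Prod>i<?k. if \<alpha> i = 0 then 1 else ?c) * (\<Prod>i<?k. xs ! i ^ \<alpha> i)"
      unfolding prod.distrib[symmetric] by (intro prod.cong) (simp_all add: lin_frac_fps_def)
    also have "(\<Prod>i<?k. if \<alpha> i = 0 then 1 else ?c) = ?c ^ ?len \<alpha>"
    proof -
      have "{..<?k} \<inter> - {i. \<alpha> i = 0} = {i. i < ?k \<and> 0 < \<alpha> i}"
        by auto
      then show ?thesis
        by (simp add: prod.If_cases size_nonzero_parts)
    qed
    finally have prod_eq: "(\<Prod>i<?k. map (lin_frac_fps (inverse q ^ 2)) xs ! i $ \<alpha> i)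
        = ?c ^ ?len \<alpha> * (\<Prod>i<?k. xs ! i ^ \<alpha> i)" .
    obtain m where m: "?len \<alpha> = Suc m"
      using size_nonzero_parts_pos[OF \<alpha> \<open>0 < t\<close>] gr0_conv_Suc by blast
    have c: "?c = inverse q * (q - inverse q)"
      using \<open>q \<noteq> 0\<close> by (simp add: right_diff_distrib power2_eq_square)
    show ?thesis
      unfolding prod_eq m c power_int_minus_nat
      by (simp only: power_mult_distrib power_Suc mult_ac diff_Suc_1)
  qed
  then show ?thesis
    unfolding prod_list_fps_nth p_fun_eq_sum_weak_compositions sum_distrib_left length_map
    by (intro sum.cong refl)
qed

lemma prod_lin_frac_fps_mult:
  "(\<Prod>x\<leftarrow>xs. lin_frac_fps r x) * (\<Prod>x\<leftarrow>xs. 1 - fps_const x * fps_X)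
     = (\<Prod>x\<leftarrow>xs. 1 - fps_const (r * x) * fps_X)"
proof (induction xs)
  case (Cons x xs)
  have "(\<Prod>x\<leftarrow>x # xs. lin_frac_fps r x) * (\<Prod>x\<leftarrow>x # xs. 1 - fps_const x * fps_X)
      = (lin_frac_fps r x * (1 - fps_const x * fps_X))
        * ((\<Prod>x\<leftarrow>xs. lin_frac_fps r x) * (\<Prod>x\<leftarrow>xs. 1 - fps_const x * fps_X))"
    by (simp add: mult_ac)
  with Cons.IH show ?case
    by (simp add: lin_frac_fps_mult)
qed simp

lemma fps_mult_nth_Suc:
  "(f * g) $ Suc m = f $ 0 * g $ Suc m + (\<Sum>i=1..m. f $ i * g $ (Suc m - i)) + f $ Suc m * g $ 0"
  by (simp add: fps_mult_nth sum.atLeast0_atMost_Suc sum.atLeast_Suc_atMost[of 0 m])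

definition pQ_fps :: "complex \<Rightarrow> complex \<Rightarrow> complex \<Rightarrow> complex list \<Rightarrow> complex fps" where
  "pQ_fps q Q \<beta> xs = Abs_fps (\<lambda>t. if t = 0 then 1 else (q - inverse q) * pQ_fun q Q \<beta> t xs)"

lemma pQ_fps_eq:
  assumes "q \<noteq> 0" and "q - inverse q \<noteq> 0"
  shows "pQ_fps q Q \<beta> xs =
    (\<Prod>x\<leftarrow>xs. lin_frac_fps (inverse q ^ 2) x) * lin_frac_fps (\<beta> powi -2) (inverse Q)"
proof (rule fps_ext)
  fix n
  let ?P = "\<Prod>x\<leftarrow>xs. lin_frac_fps (inverse q ^ 2) x"
  let ?H = "lin_frac_fps (\<beta> powi -2) (inverse Q)"
  let ?S = "\<lambda>m. \<Sum>z=1..m. beta_tilde q \<beta> * Q powi (- int (Suc m) + int z) * p_fun q z xs"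
  have beta: "(q - inverse q) * beta_tilde q \<beta> = 1 - \<beta> powi -2"
    using assms(2) by (simp add: beta_tilde_def)
  have H_nth: "?H $ k = (q - inverse q) * (beta_tilde q \<beta> * Q powi (- int k))" if "0 < k" for k
    using that by (simp add: lin_frac_fps_def beta power_int_minus_nat mult.assoc[symmetric])
  show "pQ_fps q Q \<beta> xs $ n = (?P * ?H) $ n"
  proof (cases n)
    case 0
    then show ?thesis
      by (simp add: pQ_fps_def)
  next
    case (Suc m)
    have "(\<Sum>i=1..m. ?P $ i * ?H $ (Suc m - i)) = (q - inverse q) * ((q - inverse q) * ?S m)"
      unfolding sum_distrib_left
    proof (intro sum.cong refl)
      fix z assume z: "z \<in> {1..m}"
      then have "Q powi (- int (Suc m) + int z) = Q powi (- int (Suc m - z))"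
        by (intro arg_cong[where f = "power_int Q"]) auto
      with z show "?P $ z * ?H $ (Suc m - z) = (q - inverse q) *
          ((q - inverse q) * (beta_tilde q \<beta> * Q powi (- int (Suc m) + int z) * p_fun q z xs))"
        by (simp add: prod_lin_frac_fps_nth[OF assms(1)] H_nth mult_ac)
    qed
    then have "(?P * ?H) $ Suc m = (q - inverse q) * (beta_tilde q \<beta> * Q powi (- int (Suc m)))
        + (q - inverse q) * ((q - inverse q) * ?S m) + (q - inverse q) * p_fun q (Suc m) xs"
      by (simp add: fps_mult_nth_Suc prod_lin_frac_fps_nth[OF assms(1)] H_nth)
    then show ?thesis
      by (simp add: Suc pQ_fps_def pQ_fun_def algebra_simps)
  qed
qed

definition inv_root_poly :: "'a::comm_ring_1 multiset \<Rightarrow> 'a poly" where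
  "inv_root_poly M = (\<Prod>c\<in>#M. [:1, - c:])"

section \<open>Polynomials with prescribed roots\<close>

lemma inv_root_poly_empty [simp]: "inv_root_poly {#} = 1"
  by (simp add: inv_root_poly_def)

lemma inv_root_poly_add_mset: "inv_root_poly (add_mset c M) = [:1, - c:] * inv_root_poly M"
  by (simp add: inv_root_poly_def)

lemma inv_root_poly_union: "inv_root_poly (M + N) = inv_root_poly M * inv_root_poly N"
  by (simp add: inv_root_poly_def)

lemma inv_root_poly_nonzero: "inv_root_poly (M :: 'a::idom multiset) \<noteq> 0"
  by (auto simp: inv_root_poly_def prod_mset_zero_iff)

lemma poly_inv_root_poly_eq_0_iff:
  "poly (inv_root_poly M) y = 0 \<longleftrightarrow> (\<exists>c\<in>#M. c * y = (1 :: 'a::idom))"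
  by (induction M) (auto simp: inv_root_poly_add_mset mult.commute)

lemma fps_of_poly_inv_root_poly:
  fixes xs :: "'a::field list"
  shows "fps_of_poly (inv_root_poly (mset xs)) = (\<Prod>x\<leftarrow>xs. 1 - fps_const x * fps_X)"
proof (induction xs)
  case (Cons x xs)
  have "fps_of_poly (inv_root_poly (mset (x # xs)))
      = fps_of_poly [:1, - x:] * fps_of_poly (inv_root_poly (mset xs))"
    by (simp only: mset.simps inv_root_poly_add_mset fps_of_poly_mult)
  with Cons.IH show ?case
    by (simp add: fps_of_poly_linear' fps_const_neg)
qed simp

lemma mset_eq_if_filter_nonzero_eq:
  fixes M N :: "'a::zero multiset"
  assumes "filter_mset (\<lambda>c. c \<noteq> 0) M = filter_mset (\<lambda>c. c \<noteq> 0) N" and "size M = size N"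
  shows "M = N"
proof (rule multiset_eqI)
  fix x
  have size_split: "size A = size (filter_mset (\<lambda>c. c \<noteq> 0) A) + count A 0" for A :: "'a multiset"
  proof -
    have "A = filter_mset (\<lambda>c. c \<noteq> 0) A + filter_mset (\<lambda>c. c = 0) A"
      using multiset_partition[of A "\<lambda>c. c \<noteq> 0"] by simp
    also have "filter_mset (\<lambda>c. c = 0) A = replicate_mset (count A 0) 0"
      by (rule filter_eq_replicate_mset)
    finally show ?thesis
      by (metis size_replicate_mset size_union)
  qed
  show "count M x = count N x"
  proof (cases "x = 0")
    case True
    with size_split[of M] size_split[of N] assms show ?thesis
      by simp
  next
    case False
    with arg_cong[OF assms(1), of "\<lambda>A. count A x"] show ?thesis
      by simp
  qed
qed

lemma filter_nonzero_eq_if_inv_root_poly_eq: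
  fixes M N :: "'a::field multiset"
  assumes "inv_root_poly M = inv_root_poly N"
  shows "filter_mset (\<lambda>c. c \<noteq> 0) M = filter_mset (\<lambda>c. c \<noteq> 0) N"
  using assms
proof (induction M arbitrary: N)
  case empty
  have "c = 0" if "c \<in># N" for c
  proof (rule ccontr)
    assume "c \<noteq> 0"
    with that have "poly (inv_root_poly N) (inverse c) = 0"
      by (auto simp: poly_inv_root_poly_eq_0_iff intro!: bexI[of _ c])
    with empty show False
      by simp
  qed
  then have "filter_mset (\<lambda>c. c \<noteq> 0) N = {#}"
    by simp
  then show ?case
    by simp
next
  case (add c M)
  show ?case
  proof (cases "c = 0")
    case True
    with add show ?thesis
      by (simp add: inv_root_poly_add_mset one_pCons)
  next
    case False
    have "poly (inv_root_poly (add_mset c M)) (inverse c) = 0"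
      using False by (simp add: inv_root_poly_add_mset)
    then obtain c' where "c' \<in># N" and "c' * inverse c = 1"
      by (auto simp: add.prems poly_inv_root_poly_eq_0_iff)
    moreover from this False have "c' = c"
      by (simp add: field_simps)
    ultimately obtain N' where N: "N = add_mset c N'"
      by (metis mset_add)
    with add.prems have "[:1, - c:] * inv_root_poly M = [:1, - c:] * inv_root_poly N'"
      by (simp add: inv_root_poly_add_mset)
    then have "inv_root_poly M = inv_root_poly N'"
      by (rule mult_left_cancel[THEN iffD1, rotated]) simp
    with add.IH N False show ?thesis
      by simp
  qed
qed

text \<open>Zero elements contribute the factor 1, hence the size hypothesis.\<close>

lemma inv_root_poly_inj:
  fixes M N :: "'a::field multiset"
  assumes "inv_root_poly M = inv_root_poly N" and "size M = size N"
  shows "M = N"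
  using mset_eq_if_filter_nonzero_eq[OF filter_nonzero_eq_if_inv_root_poly_eq[OF assms(1)] assms(2)] .

lemma pQ_fps_mult_inv_root_poly:
  assumes "q \<noteq> 0" and "q - inverse q \<noteq> 0"
  shows "pQ_fps q Q \<beta> xs * fps_of_poly (inv_root_poly (add_mset (inverse Q) (mset xs)))
    = fps_of_poly (inv_root_poly (add_mset (\<beta> powi -2 * inverse Q) (image_mset ((*) (inverse q ^ 2)) (mset xs))))"
proof -
  let ?r = "inverse q ^ 2"
  have "pQ_fps q Q \<beta> xs * fps_of_poly (inv_root_poly (add_mset (inverse Q) (mset xs)))
      = ((\<Prod>x\<leftarrow>xs. lin_frac_fps ?r x) * (\<Prod>x\<leftarrow>xs. 1 - fps_const x * fps_X))
        * (lin_frac_fps (\<beta> powi -2) (inverse Q) * (1 - fps_const (inverse Q) * fps_X))"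
    using fps_of_poly_inv_root_poly[of "inverse Q # xs"]
    by (simp add: pQ_fps_eq[OF assms] mult_ac)
  also have "\<dots> = (\<Prod>x\<leftarrow>xs. 1 - fps_const (?r * x) * fps_X) * (1 - fps_const (\<beta> powi -2 * inverse Q) * fps_X)"
    by (simp only: prod_lin_frac_fps_mult lin_frac_fps_mult)
  also have "\<dots> = fps_of_poly (inv_root_poly (add_mset (\<beta> powi -2 * inverse Q) (image_mset ((*) ?r) (mset xs))))"
    using fps_of_poly_inv_root_poly[of "\<beta> powi -2 * inverse Q # map ((*) ?r) xs"]
    by (simp add: mult_ac o_def)
  finally show ?thesis .
qed

definition root_poly :: "'a::comm_ring_1 multiset \<Rightarrow> 'a poly" where
  "root_poly M = (\<Prod>x\<in>#M. [:- x, 1:])"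

lemma root_poly_add_mset: "root_poly (add_mset x M) = [:- x, 1:] * root_poly M"
  by (simp add: root_poly_def)

lemma root_poly_union: "root_poly (M + N) = root_poly M * root_poly N"
  by (simp add: root_poly_def)

lemma root_poly_nonzero: "root_poly (M :: 'a::idom multiset) \<noteq> 0"
  by (auto simp: root_poly_def prod_mset_zero_iff)

lemma lead_coeff_root_poly: "lead_coeff (root_poly (M :: 'a::idom multiset)) = 1"
  by (induction M) (simp_all add: root_poly_def lead_coeff_mult del: mult_pCons_left)

lemma proots_root_poly: "proots (root_poly (M :: 'a::idom multiset)) = M"
proof (induction M)
  case (add x M)
  have "proots ([:- x, 1:] * root_poly M) = proots [:- x, 1:] + proots (root_poly M)"
    by (rule proots_mult) (simp_all add: root_poly_nonzero)
  with add.IH show ?case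
    by (simp add: root_poly_add_mset)
qed (simp add: root_poly_def)

lemma poly_root_poly_eq_0_iff: "poly (root_poly M) x = 0 \<longleftrightarrow> x \<in># (M :: 'a::idom multiset)"
  by (auto simp: root_poly_def poly_prod_mset prod_mset_zero_iff)

lemma smult_lead_coeff_root_poly_proots: "smult (lead_coeff p) (root_poly (proots p)) = (p :: complex poly)"
  unfolding root_poly_def by (rule complex_poly_decompose_multiset)

lemma eq_smult_mult_root_poly_iff:
  fixes \<phi> \<phi>' :: "complex poly"
  assumes "c \<noteq> 0" and "\<phi>' \<noteq> 0"
  shows "\<phi> = smult c (\<phi>' * root_poly M) \<longleftrightarrow>
    lead_coeff \<phi> = c * lead_coeff \<phi>' \<and> proots \<phi> = proots \<phi>' + M"
proof
  assume "\<phi> = smult c (\<phi>' * root_poly M)"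
  with assms show "lead_coeff \<phi> = c * lead_coeff \<phi>' \<and> proots \<phi> = proots \<phi>' + M"
    by (simp add: lead_coeff_mult lead_coeff_root_poly proots_mult root_poly_nonzero proots_root_poly)
next
  assume "lead_coeff \<phi> = c * lead_coeff \<phi>' \<and> proots \<phi> = proots \<phi>' + M"
  then have "\<phi> = smult (c * lead_coeff \<phi>') (root_poly (proots \<phi>' + M))"
    by (metis smult_lead_coeff_root_poly_proots)
  also have "\<dots> = smult c (smult (lead_coeff \<phi>') (root_poly (proots \<phi>')) * root_poly M)"
    by (simp add: root_poly_union)
  also have "\<dots> = smult c (\<phi>' * root_poly M)"
    by (simp only: smult_lead_coeff_root_poly_proots)
  finally show "\<phi> = smult c (\<phi>' * root_poly M)" .
qed

section \<open>Multisets and multiplication by a non-root of unity\<close>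

lemma count_image_mset_inj:
  assumes "inj f"
  shows "count (image_mset f A) (f x) = count A x"
proof -
  have "f -` {f x} = {x}"
    using assms by (auto dest: injD)
  then show ?thesis
    by (cases "x \<in># A") (simp_all add: count_image_mset not_in_iff)
qed

lemma inj_power_mult:
  fixes s x :: "'a::field"
  assumes "x \<noteq> 0" and "s \<noteq> 0" and "\<forall>m>0. s ^ m \<noteq> 1"
  shows "inj (\<lambda>m::nat. s ^ m * x)"
proof (rule linorder_injI)
  fix m n :: nat
  assume "m < n"
  then have "s ^ n * x = s ^ (n - m) * (s ^ m * x)"
    by (simp add: power_add[symmetric] mult.assoc)
  moreover have "s ^ (n - m) \<noteq> 1"
    using assms(3) \<open>m < n\<close> by simp
  moreover have "s ^ m * x \<noteq> 0"
    using assms(1,2) by simp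
  ultimately show "s ^ m * x \<noteq> s ^ n * x"
    by auto
qed

text \<open>A difference of multiplicities at z \<noteq> 0 propagates to the pairwise distinct points
  s z, s^2 z, ..., which is impossible for finite multisets.\<close>

lemma mset_eq_if_mult_invariant:
  fixes A B :: "'a::field multiset"
  assumes "s \<noteq> 0" and "\<forall>m>0. s ^ m \<noteq> 1" and "size A = size B"
    and "image_mset ((*) s) A + B = image_mset ((*) s) B + A"
  shows "A = B"
proof -
  have count_shift: "count A (s * z) + count B z = count B (s * z) + count A z" for z
    using arg_cong[OF assms(4), of "\<lambda>M. count M (s * z)"]
    by (simp add: count_image_mset_inj assms(1))
  have "count A x = count B x" if "x \<noteq> 0" for x
  proof (rule ccontr)
    assume "count A x \<noteq> count B x"
    then have orbit: "count A (s ^ m * x) \<noteq> count B (s ^ m * x)" for m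
    proof (induction m)
      case (Suc m)
      with count_shift[of "s ^ m * x"] show ?case
        by (auto simp: mult.assoc)
    qed simp
    have "s ^ m * x \<in># A + B" for m
    proof (rule ccontr)
      assume "s ^ m * x \<notin># A + B"
      with orbit[of m] show False
        by (simp add: not_in_iff)
    qed
    then have "range (\<lambda>m::nat. s ^ m * x) \<subseteq> set_mset (A + B)"
      by auto
    moreover have "infinite (range (\<lambda>m::nat. s ^ m * x))"
      using range_inj_infinite inj_power_mult[OF that assms(1,2)] by blast
    ultimately show False
      using finite_subset by blast
  qed
  then have "filter_mset (\<lambda>c. c \<noteq> 0) A = filter_mset (\<lambda>c. c \<noteq> 0) B"
    by (intro multiset_eqI) simp
  then show ?thesis
    using assms(3) by (rule mset_eq_if_filter_nonzero_eq)
qed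

definition geometric_mset :: "'a::monoid_mult \<Rightarrow> 'a \<Rightarrow> nat \<Rightarrow> 'a multiset" where
  "geometric_mset a s n = image_mset (\<lambda>j. a * s ^ j) (mset [0..<n])"

lemma geometric_mset_0 [simp]: "geometric_mset a s 0 = {#}"
  by (simp add: geometric_mset_def)

lemma geometric_mset_Suc: "geometric_mset a s (Suc n) = add_mset (a * s ^ n) (geometric_mset a s n)"
  by (simp add: geometric_mset_def)

lemma size_geometric_mset [simp]: "size (geometric_mset a s n) = n"
  by (simp add: geometric_mset_def)

lemma geometric_mset_mem: "0 < n \<Longrightarrow> a \<in># geometric_mset a s n"
  by (auto simp: geometric_mset_def image_iff intro!: bexI[of _ 0])

lemma add_mset_mult_geometric_mset:
  fixes a s :: "'a::comm_monoid_mult"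
  shows "add_mset a (image_mset ((*) s) (geometric_mset a s n)) = add_mset (a * s ^ n) (geometric_mset a s n)"
proof (induction n)
  case (Suc n)
  then show ?case
    by (simp add: geometric_mset_Suc mult_ac)
qed (simp add: geometric_mset_def)

lemma mult_shift_eq_iff_geometric:
  fixes A B :: "'a::field multiset"
  assumes "s \<noteq> 0" and "\<forall>m>0. s ^ m \<noteq> 1" and "size A = size B + n"
  shows "add_mset a (image_mset ((*) s) A + B) = add_mset (a * s ^ n) (image_mset ((*) s) B + A)
    \<longleftrightarrow> A = B + geometric_mset a s n"
    (is "?shift A \<longleftrightarrow> _")
proof
  let ?G = "geometric_mset a s n"
  have shift_G: "?shift (B + ?G)"
    using add_mset_mult_geometric_mset[of a s n] by (simp add: add_ac)
  assume "?shift A"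
  let ?X = "add_mset a B" and ?Y = "add_mset (a * s ^ n) (image_mset ((*) s) B)"
  have "image_mset ((*) s) A + (B + ?G) + (?X + ?Y) = (?X + image_mset ((*) s) A) + (?Y + (B + ?G))"
    by (simp add: add_ac)
  also have "\<dots> = (?Y + A) + (?X + image_mset ((*) s) (B + ?G))"
    using \<open>?shift A\<close> shift_G by (simp add: add_ac)
  also have "\<dots> = image_mset ((*) s) (B + ?G) + A + (?X + ?Y)"
    by (simp add: add_ac)
  finally have "image_mset ((*) s) A + (B + ?G) = image_mset ((*) s) (B + ?G) + A"
    by (rule add_right_imp_eq)
  moreover have "size A = size (B + ?G)"
    using assms(3) by simp
  ultimately show "A = B + ?G"
    using mset_eq_if_mult_invariant[OF assms(1,2)] by blast
next
  assume "A = B + geometric_mset a s n"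
  then show "?shift A"
    using add_mset_mult_geometric_mset[of a s n] by (simp add: add_ac)
qed

lemma prod_linear_eq_root_poly_geometric:
  fixes q b :: complex
  shows "(\<Prod>z=1..n. [:- (q powi (- 2 * (int z - 1)) * b), 1:]) = root_poly (geometric_mset b (inverse q ^ 2) n)"
proof (induction n)
  case (Suc n)
  have "q powi (- 2 * (int (Suc n) - 1)) = (inverse q ^ 2) ^ n"
    using power_int_minus_nat[of q "2 * n"] by (simp add: power_mult)
  with Suc.IH show ?case
    by (simp add: geometric_mset_Suc root_poly_add_mset mult_ac)
qed (simp add: root_poly_def)

lemma not_root_of_unity_inverse_square:
  fixes q :: "'a::field"
  assumes "\<forall>n>0. q ^ n \<noteq> 1"
  shows "\<forall>m>0. (inverse q ^ 2) ^ m \<noteq> 1"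
proof (intro allI impI)
  fix m :: nat
  assume "0 < m"
  then have "q ^ (2 * m) \<noteq> 1"
    using assms by simp
  then show "(inverse q ^ 2) ^ m \<noteq> 1"
    by (metis inverse_1 inverse_inverse_eq power_inverse power_mult)
qed

lemma diff_inverse_nonzero:
  fixes q :: "'a::field"
  assumes "q \<noteq> 0" and "q ^ 2 \<noteq> 1"
  shows "q - inverse q \<noteq> 0"
proof
  assume "q - inverse q = 0"
  then have "q * q = 1"
    using assms(1) by (simp add: field_simps)
  with assms(2) show False
    by (simp add: power2_eq_square)
qed

lemma eq_iff_cross_mult_eq:
  fixes a a' d d' :: "'a::idom"
  assumes "d \<noteq> 0" and "d' \<noteq> 0"
  shows "a = a' \<longleftrightarrow> (a * d) * d' = (a' * d') * d"
proof
  assume "(a * d) * d' = (a' * d') * d"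
  then have "a * (d * d') = a' * (d * d')"
    by (simp add: mult_ac)
  with assms show "a = a'"
    by simp
qed simp

section \<open>The map u^<Q>\<close>

lemma mset_root_list: "mset (root_list \<phi>) = proots \<phi>"
  unfolding root_list_def by (rule someI_ex) (rule ex_mset)

lemma uQ_altdef: "uQ q Q \<phi> = (lead_coeff \<phi> * q ^ degree \<phi>,
    \<lambda>t. if t = 0 then 0 else pQ_fun q Q (lead_coeff \<phi>) t (root_list \<phi>))"
proof (cases "degree \<phi> = 0")
  case True
  then have "root_list \<phi> = []"
    using mset_root_list[of \<phi>] size_proots_complex[of \<phi>] by (metis length_0_conv size_mset)
  with True show ?thesis
    by (simp add: uQ_def pQ_fun_def p_fun_Nil fun_eq_iff)
qed (simp add: uQ_def)

lemma uQ_snd_eq_iff_pQ_fps_eq: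
  assumes "q - inverse q \<noteq> 0"
  shows "snd (uQ q Q \<phi>) = snd (uQ q Q \<phi>')
    \<longleftrightarrow> pQ_fps q Q (lead_coeff \<phi>) (root_list \<phi>) = pQ_fps q Q (lead_coeff \<phi>') (root_list \<phi>')"
  using assms by (auto simp: uQ_altdef fun_eq_iff fps_eq_iff pQ_fps_def)

text \<open>The reciprocal zeros of the generating series of u(\<phi>); its reciprocal poles are Q^-1
  and the roots of \<phi>.\<close>

definition numer_mset :: "complex \<Rightarrow> complex \<Rightarrow> complex poly \<Rightarrow> complex multiset" where
  "numer_mset q Q \<phi> =
     add_mset (lead_coeff \<phi> powi -2 * inverse Q) (image_mset ((*) (inverse q ^ 2)) (proots \<phi>))"

lemma pQ_fps_root_list:
  assumes "q \<noteq> 0" and "q - inverse q \<noteq> 0"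
  shows "pQ_fps q Q (lead_coeff \<phi>) (root_list \<phi>) * fps_of_poly (inv_root_poly (add_mset (inverse Q) (proots \<phi>)))
    = fps_of_poly (inv_root_poly (numer_mset q Q \<phi>))"
  using pQ_fps_mult_inv_root_poly[OF assms, of Q "lead_coeff \<phi>" "root_list \<phi>"]
  by (simp add: mset_root_list numer_mset_def)

lemma uQ_eq_iff_mset_eq:
  assumes "q \<noteq> 0" and "q - inverse q \<noteq> 0"
  shows "uQ q Q \<phi> = uQ q Q \<phi>' \<longleftrightarrow>
    lead_coeff \<phi> * q ^ degree \<phi> = lead_coeff \<phi>' * q ^ degree \<phi>' \<and>
    numer_mset q Q \<phi> + proots \<phi>' = numer_mset q Q \<phi>' + proots \<phi>"
proof -
  let ?E = "\<lambda>\<phi>. pQ_fps q Q (lead_coeff \<phi>) (root_list \<phi>)"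
  let ?D = "\<lambda>\<phi>. add_mset (inverse Q) (proots \<phi>)"
  let ?F = "\<lambda>M. fps_of_poly (inv_root_poly M)"
  have "snd (uQ q Q \<phi>) = snd (uQ q Q \<phi>') \<longleftrightarrow> ?E \<phi> = ?E \<phi>'"
    by (rule uQ_snd_eq_iff_pQ_fps_eq[OF assms(2)])
  also have "\<dots> \<longleftrightarrow> (?E \<phi> * ?F (?D \<phi>)) * ?F (?D \<phi>') = (?E \<phi>' * ?F (?D \<phi>')) * ?F (?D \<phi>)"
    by (rule eq_iff_cross_mult_eq) (simp_all add: inv_root_poly_nonzero)
  also have "\<dots> \<longleftrightarrow> inv_root_poly (numer_mset q Q \<phi> + ?D \<phi>') = inv_root_poly (numer_mset q Q \<phi>' + ?D \<phi>)"
    by (simp only: pQ_fps_root_list[OF assms] fps_of_poly_mult[symmetric] fps_of_poly_eq_iff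
        inv_root_poly_union[symmetric])
  also have "\<dots> \<longleftrightarrow> numer_mset q Q \<phi> + ?D \<phi>' = numer_mset q Q \<phi>' + ?D \<phi>"
  proof
    assume "inv_root_poly (numer_mset q Q \<phi> + ?D \<phi>') = inv_root_poly (numer_mset q Q \<phi>' + ?D \<phi>)"
    then show "numer_mset q Q \<phi> + ?D \<phi>' = numer_mset q Q \<phi>' + ?D \<phi>"
      by (rule inv_root_poly_inj) (simp add: numer_mset_def)
  qed simp
  also have "\<dots> \<longleftrightarrow> numer_mset q Q \<phi> + proots \<phi>' = numer_mset q Q \<phi>' + proots \<phi>"
    by simp
  finally show ?thesis
    by (simp add: prod_eq_iff uQ_altdef)
qed

lemma powi_minus_two_mult_power:
  fixes \<beta> q :: "'a::field"
  shows "(\<beta> * q ^ n) powi -2 = \<beta> powi -2 * (inverse q ^ 2) ^ n"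
  by (simp add: power_int_minus power_mult_distrib power_inverse power_mult[symmetric] mult_ac)

lemma uQ_eq_iff_root_poly:
  fixes q Q :: complex
  assumes q: "q \<noteq> 0" "\<forall>n>0. q ^ n \<noteq> 1" and "\<phi>' \<noteq> 0" and deg: "degree \<phi> = degree \<phi>' + n"
  shows "uQ q Q \<phi> = uQ q Q \<phi>' \<longleftrightarrow>
    \<phi> = smult (q powi - int n) (\<phi>' * root_poly (geometric_mset (lead_coeff \<phi> powi -2 * inverse Q) (inverse q ^ 2) n))"
proof -
  define \<beta> \<beta>' s a where "\<beta> = lead_coeff \<phi>" and "\<beta>' = lead_coeff \<phi>'"
    and "s = inverse q ^ 2" and "a = \<beta> powi -2 * inverse Q"
  have lead_iff: "\<beta> * q ^ degree \<phi> = \<beta>' * q ^ degree \<phi>' \<longleftrightarrow> \<beta>' = \<beta> * q ^ n"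
    using q(1) by (auto simp: deg power_add)
  have lead_iff': "\<beta> = q powi - int n * \<beta>' \<longleftrightarrow> \<beta>' = \<beta> * q ^ n"
    using q(1) by (auto simp: power_int_minus_nat power_inverse field_simps)
  have numer: "numer_mset q Q \<phi> = add_mset a (image_mset ((*) s) (proots \<phi>))"
    by (simp add: numer_mset_def a_def \<beta>_def s_def)
  have numer': "numer_mset q Q \<phi>' = add_mset (a * s ^ n) (image_mset ((*) s) (proots \<phi>'))"
    if "\<beta>' = \<beta> * q ^ n"
    using that by (simp add: numer_mset_def a_def \<beta>'_def s_def powi_minus_two_mult_power mult_ac)
  have size: "size (proots \<phi>) = size (proots \<phi>') + n"
    by (simp add: size_proots_complex deg)
  have "q ^ 2 \<noteq> 1" and "s \<noteq> 0"
    using q by (simp_all add: s_def)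
  have "uQ q Q \<phi> = uQ q Q \<phi>' \<longleftrightarrow> \<beta> * q ^ degree \<phi> = \<beta>' * q ^ degree \<phi>' \<and>
      numer_mset q Q \<phi> + proots \<phi>' = numer_mset q Q \<phi>' + proots \<phi>"
    unfolding \<beta>_def \<beta>'_def
    by (rule uQ_eq_iff_mset_eq[OF q(1) diff_inverse_nonzero[OF q(1) \<open>q ^ 2 \<noteq> 1\<close>]])
  also have "\<dots> \<longleftrightarrow> \<beta>' = \<beta> * q ^ n \<and>
      add_mset a (image_mset ((*) s) (proots \<phi>) + proots \<phi>')
      = add_mset (a * s ^ n) (image_mset ((*) s) (proots \<phi>') + proots \<phi>)"
    using numer numer' lead_iff by auto
  also have "\<dots> \<longleftrightarrow> \<beta>' = \<beta> * q ^ n \<and> proots \<phi> = proots \<phi>' + geometric_mset a s n"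
    using mult_shift_eq_iff_geometric[OF \<open>s \<noteq> 0\<close> _ size] not_root_of_unity_inverse_square[OF q(2)]
    by (simp add: s_def)
  also have "\<dots> \<longleftrightarrow> \<phi> = smult (q powi - int n) (\<phi>' * root_poly (geometric_mset a s n))"
    using eq_smult_mult_root_poly_iff[of "q powi - int n" \<phi>' \<phi>] assms lead_iff'
    by (simp add: \<beta>_def \<beta>'_def)
  finally show ?thesis
    by (simp add: a_def \<beta>_def s_def)
qed

lemma uQ_eq_imp_eq_if_polysQ:
  fixes q Q :: complex
  assumes q: "q \<noteq> 0" "\<forall>n>0. q ^ n \<noteq> 1"
    and "\<phi> \<in> polysQ Q" and "\<phi>' \<in> polysQ Q" and "degree \<phi>' \<le> degree \<phi>"
    and "uQ q Q \<phi> = uQ q Q \<phi>'"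
  shows "\<phi> = \<phi>'"
proof -
  define n where "n = degree \<phi> - degree \<phi>'"
  define a where "a = lead_coeff \<phi> powi -2 * inverse Q"
  have "\<phi>' \<noteq> 0" and a_not_root: "poly \<phi> a \<noteq> 0"
    using assms(3,4) by (simp_all add: polysQ_def a_def)
  have \<phi>: "\<phi> = smult (q powi - int n) (\<phi>' * root_poly (geometric_mset a (inverse q ^ 2) n))"
    using uQ_eq_iff_root_poly[OF q \<open>\<phi>' \<noteq> 0\<close>, of \<phi> n Q] assms(5,6) by (simp add: n_def a_def)
  have "n = 0"
  proof (rule ccontr)
    assume "n \<noteq> 0"
    then have "poly (root_poly (geometric_mset a (inverse q ^ 2) n)) a = 0"
      by (simp add: poly_root_poly_eq_0_iff geometric_mset_mem)
    then have "poly \<phi> a = 0"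
      by (subst \<phi>) simp
    with a_not_root show False ..
  qed
  with \<phi> show ?thesis
    by (simp add: root_poly_def)
qed

lemma inj_on_uQ_polysQ:
  fixes q Q :: complex
  assumes "q \<noteq> 0" and "\<forall>n>0. q ^ n \<noteq> 1"
  shows "inj_on (uQ q Q) (polysQ Q)"
proof (rule inj_onI)
  fix \<phi> \<phi>' assume \<phi>: "\<phi> \<in> polysQ Q" and \<phi>': "\<phi>' \<in> polysQ Q" and eq: "uQ q Q \<phi> = uQ q Q \<phi>'"
  show "\<phi> = \<phi>'"
  proof (cases "degree \<phi>' \<le> degree \<phi>")
    case True
    show ?thesis
      by (rule uQ_eq_imp_eq_if_polysQ[OF assms \<phi> \<phi>' True eq])
  next
    case False
    show ?thesis
      by (rule uQ_eq_imp_eq_if_polysQ[OF assms \<phi>' \<phi> _ eq[symmetric], symmetric]) (use False in simp)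
  qed
qed

lemma uQ_mult_linear_factor:
  fixes q Q :: complex
  assumes q: "q \<noteq> 0" "\<forall>n>0. q ^ n \<noteq> 1" and "\<psi> \<noteq> 0" and a: "a = lead_coeff \<psi> powi -2 * inverse Q"
  shows "uQ q Q ([:- a, 1:] * \<psi>) = uQ q Q (smult q \<psi>)"
proof -
  have deg: "degree ([:- a, 1:] * \<psi>) = degree (smult q \<psi>) + 1"
    using assms by (subst degree_mult_eq) simp_all
  have lead: "lead_coeff ([:- a, 1:] * \<psi>) = lead_coeff \<psi>"
    by (simp add: lead_coeff_mult del: mult_pCons_left)
  have "root_poly (geometric_mset a (inverse q ^ 2) 1) = [:- a, 1:]"
    by (simp add: geometric_mset_Suc root_poly_add_mset root_poly_def del: mult_pCons_left)
  moreover have "q powi - int 1 * q = 1"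
    using q(1) by (simp add: power_int_minus_nat)
  ultimately have "[:- a, 1:] * \<psi> = smult (q powi - int 1) (smult q \<psi> * root_poly (geometric_mset a (inverse q ^ 2) 1))"
    by (simp only: mult_smult_left smult_smult smult_1_left mult.commute)
  with uQ_eq_iff_root_poly[OF q _ deg, of Q] assms lead show ?thesis
    by simp
qed

lemma ex_polysQ_uQ_eq:
  fixes q Q :: complex
  assumes q: "q \<noteq> 0" "\<forall>n>0. q ^ n \<noteq> 1" and "\<phi> \<noteq> 0"
  shows "\<exists>\<phi>'\<in>polysQ Q. uQ q Q \<phi> = uQ q Q \<phi>'"
  using assms(3)
proof (induction "degree \<phi>" arbitrary: \<phi> rule: less_induct)
  case less
  show ?case
  proof (cases "\<phi> \<in> polysQ Q")
    case False
    define a where "a = lead_coeff \<phi> powi -2 * inverse Q"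
    have "poly \<phi> a = 0"
      using False less.prems by (simp add: polysQ_def a_def)
    then obtain \<psi> where \<psi>: "\<phi> = [:- a, 1:] * \<psi>"
      by (auto simp: poly_eq_0_iff_dvd elim: dvdE)
    with less.prems have "\<psi> \<noteq> 0"
      by auto
    have "lead_coeff \<phi> = lead_coeff \<psi>"
      by (simp add: \<psi> lead_coeff_mult del: mult_pCons_left)
    then have "uQ q Q ([:- a, 1:] * \<psi>) = uQ q Q (smult q \<psi>)"
      by (intro uQ_mult_linear_factor[OF q \<open>\<psi> \<noteq> 0\<close>]) (simp add: a_def)
    then have "uQ q Q \<phi> = uQ q Q (smult q \<psi>)"
      by (simp only: \<psi>[symmetric])
    moreover have "degree (smult q \<psi>) < degree \<phi>" and "smult q \<psi> \<noteq> 0"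
      using \<open>\<psi> \<noteq> 0\<close> q(1) by (simp_all add: \<psi> degree_mult_eq del: mult_pCons_left)
    ultimately show ?thesis
      using less.hyps by metis
  qed auto
qed

lemma uQ_eq_iff_prod_linear:
  fixes q Q :: complex
  assumes "q \<noteq> 0" and "\<forall>n>0. q ^ n \<noteq> 1" and "\<phi>' \<noteq> 0" and "degree \<phi>' \<le> degree \<phi>"
  shows "uQ q Q \<phi> = uQ q Q \<phi>' \<longleftrightarrow>
    \<phi> = smult (q powi (- int (degree \<phi> - degree \<phi>')))
      (\<phi>' * (\<Prod>z=1..degree \<phi> - degree \<phi>'.
         [: - (q powi (- 2 * (int z - 1)) * (lead_coeff \<phi>) powi (-2) * inverse Q), 1 :]))"
proof -
  have "degree \<phi> = degree \<phi>' + (degree \<phi> - degree \<phi>')"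
    using assms(4) by simp
  from uQ_eq_iff_root_poly[OF assms(1-3) this, of Q] show ?thesis
    by (simp only: mult.assoc prod_linear_eq_root_poly_geometric)
qed

lemma ex1_polysQ_uQ_eq:
  fixes q Q :: complex
  assumes "q \<noteq> 0" and "\<forall>n>0. q ^ n \<noteq> 1" and "\<phi> \<noteq> 0"
  shows "\<exists>!\<phi>'. \<phi>' \<in> polysQ Q \<and> uQ q Q \<phi> = uQ q Q \<phi>'"
proof -
  obtain \<phi>' where \<phi>': "\<phi>' \<in> polysQ Q" "uQ q Q \<phi> = uQ q Q \<phi>'"
    using ex_polysQ_uQ_eq[OF assms] by blast
  show ?thesis
  proof (rule ex1I[of _ \<phi>'])
    fix \<chi> assume "\<chi> \<in> polysQ Q \<and> uQ q Q \<phi> = uQ q Q \<chi>"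
    with \<phi>' show "\<chi> = \<phi>'"
      using inj_onD[OF inj_on_uQ_polysQ[OF assms(1,2)], of Q \<chi> \<phi>'] by simp
  qed (use \<phi>' in simp)
qed

theorem mainTheorem2:
  fixes q Q :: complex
  assumes "q \<noteq> 0" and "\<forall>n::nat. 0 < n \<longrightarrow> q ^ n \<noteq> 1" and "Q \<noteq> 0"
  shows "(\<forall>\<phi> \<phi>' :: complex poly. \<phi> \<noteq> 0 \<longrightarrow> \<phi>' \<noteq> 0 \<longrightarrow> degree \<phi>' \<le> degree \<phi> \<longrightarrow>
           (uQ q Q \<phi> = uQ q Q \<phi>' \<longleftrightarrow>
            \<phi> = smult (q powi (- int (degree \<phi> - degree \<phi>')))
                   (\<phi>' * (\<Prod>z=1..degree \<phi> - degree \<phi>'.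
                      [: - (q powi (- 2 * (int z - 1)) * (lead_coeff \<phi>) powi (-2) * inverse Q), 1 :]))))
       \<and> inj_on (uQ q Q) (polysQ Q)
       \<and> (\<forall>\<phi> :: complex poly. \<phi> \<noteq> 0 \<longrightarrow> (\<exists>!\<phi>'. \<phi>' \<in> polysQ Q \<and> uQ q Q \<phi> = uQ q Q \<phi>'))"
  using uQ_eq_iff_prod_linear[OF assms(1,2)] inj_on_uQ_polysQ[OF assms(1,2)] ex1_polysQ_uQ_eq[OF assms(1,2)]
  by blast

end
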